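(* Let $0<r<s<\infty$, $\theta\in[0,\frac18)$, and let $f\colon[r,s]\to\mathbb R$ be non-decreasing and right-continuous. Then for every measurable $E\subset[r,s]$ with $\mathscr{L}^{1}(E)<\theta(s-r)$ there exist $r<\tilde r<\tilde s<s$ with $\tilde r,\tilde s\notin E$ such that, for $a\in\{\tilde r,\tilde s\}$, \[ \frac{f(a)-f(\tau)}{a-\tau}\leq\frac{800}{1-8\theta}\frac{f(s)-f(r)}{s-r}\ \text{ for all }\tau\in[r,a),\qquad \frac{f(\tau)-f(a)}{\tau-a}\leq\frac{800}{1-8\theta}\frac{f(s)-f(r)}{s-r}\ \text{ for all }\tau\in(a,s], \] and $(\tilde s-\tilde r)\leq(s-r)\leq8(\tilde s-\tilde r)$. *)

theory Defs
  imports "HOL-Analysis.Analysis"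
begin

end

theory Submission
  imports Defs
begin

(* With m = 800/(1 - 8\<theta>) (f s - f r)/(s - r), call a point bad if some difference quotient of f
   there exceeds m.  If x is a continuity point that is bad on the right, the running supremum
   sup {f t - m t | y \<le> t \<le> s} is constant for y near x (rising sun lemma), so the nondecreasing
   function sup {f t - m t | y \<le> t \<le> s} + m y grows exactly at rate m near x; symmetrically on the
   left with an infimum.  Both functions increase by at most f s - f r over [r, s], so by Cousin's
   lemma an interval [p, q] all of whose points outside an open set T are bad has length at most
   |T \<inter> [p, q]| + 2 (f s - f r)/m \<le> |T \<inter> [p, q]| + (s - r)/400.  Covering E and the countably many
   discontinuities of f by an open T of measure barely above |E| < (s - r)/8 then leaves good points
   outside E in [r + L/8, r + 3L/8] and in [s - 3L/8, s - L/8], where L = s - r. *)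

lemma SUP_tail_extend:
  fixes g :: "real \<Rightarrow> real"
  assumes bdd: "bdd_above (g ` {w..b})" and "w \<le> z" "z \<le> b"
    and below: "\<forall>t\<in>{w..<z}. g t \<le> (SUP t\<in>{z..b}. g t)"
  shows "(SUP t\<in>{w..b}. g t) = (SUP t\<in>{z..b}. g t)"
proof (rule antisym)
  have bdd_z: "bdd_above (g ` {z..b})"
    using bdd by (rule bdd_above_mono) (use \<open>w \<le> z\<close> in auto)
  show "(SUP t\<in>{w..b}. g t) \<le> (SUP t\<in>{z..b}. g t)"
  proof (rule cSUP_least)
    fix t assume "t \<in> {w..b}"
    then show "g t \<le> (SUP t\<in>{z..b}. g t)"
      using below bdd_z by (cases "t < z") (auto intro: cSUP_upper)
  qed (use \<open>w \<le> z\<close> \<open>z \<le> b\<close> in auto)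
  show "(SUP t\<in>{z..b}. g t) \<le> (SUP t\<in>{w..b}. g t)"
    using bdd \<open>w \<le> z\<close> \<open>z \<le> b\<close> by (intro cSUP_subset_mono) auto
qed

lemma SUP_tail_locally_constant:
  fixes g :: "real \<Rightarrow> real"
  assumes bdd: "bdd_above (g ` {a..b})" and "a \<le> x" and "isCont g x"
    and \<tau>: "\<tau> \<in> {x<..b}" "g x < g \<tau>"
  shows "\<exists>d>0. \<forall>y\<in>{a..b} \<inter> ball x d. (SUP t\<in>{y..b}. g t) = (SUP t\<in>{x..b}. g t)"
proof -
  let ?G = "\<lambda>u. SUP t\<in>{u..b}. g t"
  obtain d1 where "d1 > 0" and d1: "\<And>y. dist y x < d1 \<Longrightarrow> g y < g \<tau>"
    using \<open>isCont g x\<close> \<tau>(2) unfolding continuous_at_eps_delta dist_real_def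
    by (metis diff_gt_0_iff_gt abs_diff_less_iff add.commute diff_add_cancel)
  define d where "d = min d1 (\<tau> - x)"
  have "?G y = ?G x" if y: "y \<in> {a..b} \<inter> ball x d" for y
  proof -
    have "max x y < \<tau>" "\<tau> \<le> b"
      using y \<tau> by (auto simp: d_def dist_real_def)
    have "g t \<le> ?G (max x y)" if "t \<in> {min x y..<max x y}" for t
    proof -
      have "g t < g \<tau>"
        using that y by (intro d1) (auto simp: d_def dist_real_def)
      also have "g \<tau> \<le> ?G (max x y)"
        using bdd \<open>a \<le> x\<close> \<tau> y \<open>max x y < \<tau>\<close> by (intro cSUP_upper) (auto elim!: bdd_above_mono)
      finally show ?thesis by simp
    qed
    then have "?G (min x y) = ?G (max x y)"
      using bdd \<open>a \<le> x\<close> y \<open>max x y < \<tau>\<close> \<open>\<tau> \<le> b\<close>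
      by (intro SUP_tail_extend) (auto elim!: bdd_above_mono)
    then show ?thesis
      by (metis max.commute max_def min.commute min_def)
  qed
  moreover have "d > 0"
    using \<open>d1 > 0\<close> \<tau> by (simp add: d_def)
  ultimately show ?thesis by blast
qed

lemma mono_on_reflect:
  fixes f :: "real \<Rightarrow> real"
  assumes "mono_on {a..b} f"
  shows "mono_on {-b..-a} (\<lambda>t. - f (- t))"
proof (rule mono_onI)
  fix x y assume "x \<in> {-b..-a}" "y \<in> {-b..-a}" "x \<le> y"
  then show "- f (- x) \<le> - f (- y)"
    using mono_onD[OF assms, of "- y" "- x"] by auto
qed

definition right_env :: "real \<Rightarrow> real \<Rightarrow> (real \<Rightarrow> real) \<Rightarrow> real \<Rightarrow> real" where
  "right_env m b f x = (SUP t\<in>{x..b}. f t - m * t) + m * x"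

lemma right_env_at_end: "right_env m b f b = f b"
  by (simp add: right_env_def)

context
  fixes f :: "real \<Rightarrow> real" and a b m :: real
  assumes mono: "mono_on {a..b} f" and nonneg: "0 \<le> m"
begin

lemma bdd_above_tilted_image: "a \<le> x \<Longrightarrow> bdd_above ((\<lambda>t. f t - m * t) ` {x..b})"
proof (rule bdd_aboveI2)
  fix t assume "a \<le> x" "t \<in> {x..b}"
  then show "f t - m * t \<le> f b - m * a"
    using mono_onD[OF mono, of t b] mult_left_mono[of a t m] nonneg by auto
qed

lemma le_right_env: "x \<in> {a..b} \<Longrightarrow> f x \<le> right_env m b f x"
  using cSUP_upper[OF _ bdd_above_tilted_image, of x x] by (auto simp: right_env_def)

lemma right_env_mono: "mono_on {a..b} (right_env m b f)"
proof (rule mono_onI)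
  fix x y assume "x \<in> {a..b}" "y \<in> {a..b}" "x \<le> y"
  have "f t - m * t \<le> right_env m b f y - m * x" if "t \<in> {x..b}" for t
  proof (cases "y \<le> t")
    case True
    then have "f t - m * t \<le> (SUP t\<in>{y..b}. f t - m * t)"
      using that \<open>y \<in> {a..b}\<close> by (intro cSUP_upper bdd_above_tilted_image) auto
    then show ?thesis
      using \<open>x \<le> y\<close> nonneg mult_left_mono[of x y m] by (simp add: right_env_def)
  next
    case False
    have "f t - m * t + m * x \<le> f t"
      using that nonneg by (simp add: mult_left_mono)
    also have "f t \<le> f y"
      using False that \<open>x \<in> {a..b}\<close> \<open>y \<in> {a..b}\<close> by (intro mono_onD[OF mono]) auto
    also have "f y \<le> right_env m b f y"
      using \<open>y \<in> {a..b}\<close> by (rule le_right_env)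
    finally show ?thesis by simp
  qed
  then have "(SUP t\<in>{x..b}. f t - m * t) \<le> right_env m b f y - m * x"
    using \<open>y \<in> {a..b}\<close> \<open>x \<le> y\<close> by (intro cSUP_least) auto
  then show "right_env m b f x \<le> right_env m b f y"
    by (simp add: right_env_def)
qed

lemma right_env_increment_le:
  assumes "a \<le> p" "p \<le> q" "q \<le> b"
  shows "right_env m b f q - right_env m b f p \<le> f b - f a"
proof -
  have "right_env m b f q \<le> right_env m b f b"
    using assms by (intro mono_onD[OF right_env_mono]) auto
  moreover have "f a \<le> right_env m b f a"
    using assms by (intro le_right_env) auto
  moreover have "right_env m b f a \<le> right_env m b f p"
    using assms by (intro mono_onD[OF right_env_mono]) auto
  ultimately show ?thesis
    by (simp add: right_env_at_end)
qed

lemma right_env_locally_affine: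
  assumes "a \<le> x" "isCont f x" "\<tau> \<in> {x<..b}" "m * (\<tau> - x) < f \<tau> - f x"
  shows "\<exists>d>0. \<forall>y\<in>{a..b} \<inter> ball x d. right_env m b f y - m * y = right_env m b f x - m * x"
proof -
  have "\<exists>d>0. \<forall>y\<in>{a..b} \<inter> ball x d.
          (SUP t\<in>{y..b}. f t - m * t) = (SUP t\<in>{x..b}. f t - m * t)"
    using assms by (intro SUP_tail_locally_constant bdd_above_tilted_image continuous_intros)
      (auto simp: algebra_simps)
  then show ?thesis
    by (simp add: right_env_def)
qed

end

(* left_env m a f x = (INF t\<in>{a..x}. f t - m * t) + m * x, defined by reflection so that its
   properties follow from those of right_env. *)
definition left_env :: "real \<Rightarrow> real \<Rightarrow> (real \<Rightarrow> real) \<Rightarrow> real \<Rightarrow> real" where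
  "left_env m a f x = - right_env m (- a) (\<lambda>t. - f (- t)) (- x)"

definition slope_env :: "real \<Rightarrow> real \<Rightarrow> real \<Rightarrow> (real \<Rightarrow> real) \<Rightarrow> real \<Rightarrow> real" where
  "slope_env m a b f x = right_env m b f x + left_env m a f x"

definition slope_bounded_at :: "(real \<Rightarrow> real) \<Rightarrow> real \<Rightarrow> real \<Rightarrow> real \<Rightarrow> real \<Rightarrow> bool" where
  "slope_bounded_at f a b m x \<longleftrightarrow>
     (\<forall>\<tau>\<in>{a..<x}. (f x - f \<tau>) / (x - \<tau>) \<le> m) \<and> (\<forall>\<tau>\<in>{x<..b}. (f \<tau> - f x) / (\<tau> - x) \<le> m)"

lemma not_slope_bounded_atD:
  assumes "\<not> slope_bounded_at f a b m x"
  shows "(\<exists>\<tau>\<in>{a..<x}. m * (x - \<tau>) < f x - f \<tau>) \<or> (\<exists>\<tau>\<in>{x<..b}. m * (\<tau> - x) < f \<tau> - f x)"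
  using assms by (auto simp: slope_bounded_at_def not_le pos_less_divide_eq)

context
  fixes f :: "real \<Rightarrow> real" and a b m :: real
  assumes mono: "mono_on {a..b} f" and nonneg: "0 \<le> m"
begin

lemma left_env_mono: "mono_on {a..b} (left_env m a f)"
proof (rule mono_onI)
  fix x y assume "x \<in> {a..b}" "y \<in> {a..b}" "x \<le> y"
  then show "left_env m a f x \<le> left_env m a f y"
    using mono_onD[OF right_env_mono[OF mono_on_reflect[OF mono] nonneg], of "- y" "- x"]
    by (simp add: left_env_def)
qed

lemma left_env_increment_le:
  assumes "a \<le> p" "p \<le> q" "q \<le> b"
  shows "left_env m a f q - left_env m a f p \<le> f b - f a"
  using right_env_increment_le[OF mono_on_reflect[OF mono] nonneg, of "- q" "- p"] assms
  by (simp add: left_env_def)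

lemma left_env_locally_affine:
  assumes "x \<le> b" "isCont f x" "\<tau> \<in> {a..<x}" "m * (x - \<tau>) < f x - f \<tau>"
  shows "\<exists>d>0. \<forall>y\<in>{a..b} \<inter> ball x d. left_env m a f y - m * y = left_env m a f x - m * x"
proof -
  let ?g = "\<lambda>t. - f (- t)"
  have "isCont ?g (- x)"
    using isCont_o2[where f=uminus and a="- x" and g=f] assms(2) by simp
  then obtain d where "d > 0" and d: "\<forall>y\<in>{-b..-a} \<inter> ball (- x) d.
      right_env m (- a) ?g y - m * y = right_env m (- a) ?g (- x) - m * - x"
    using right_env_locally_affine[OF mono_on_reflect[OF mono] nonneg, of "- x" "- \<tau>"] assms
    by auto
  have "left_env m a f y - m * y = left_env m a f x - m * x" if "y \<in> {a..b} \<inter> ball x d" for y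
  proof -
    have "- y \<in> {-b..-a} \<inter> ball (- x) d"
      using that by (simp add: dist_real_def abs_minus_commute)
    then have "right_env m (- a) ?g (- y) - m * - y = right_env m (- a) ?g (- x) - m * - x"
      using d by blast
    then show ?thesis
      by (simp add: left_env_def)
  qed
  with \<open>d > 0\<close> show ?thesis by blast
qed

lemma slope_env_mono: "mono_on {a..b} (slope_env m a b f)"
  using mono_onD[OF right_env_mono[OF mono nonneg]] mono_onD[OF left_env_mono]
  by (intro mono_onI) (simp add: slope_env_def add_mono)

lemma slope_env_increment_le:
  assumes "a \<le> p" "p \<le> q" "q \<le> b"
  shows "slope_env m a b f q - slope_env m a b f p \<le> 2 * (f b - f a)"
  using right_env_increment_le[OF mono nonneg assms] left_env_increment_le[OF assms]
  by (simp add: slope_env_def)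

lemma slope_env_locally_expanding:
  assumes "x \<in> {a..b}" "isCont f x" "\<not> slope_bounded_at f a b m x"
  shows "\<exists>d>0. \<forall>c\<in>{a..b} \<inter> ball x d. \<forall>e\<in>{a..b} \<inter> ball x d.
           c \<le> e \<longrightarrow> m * (e - c) \<le> slope_env m a b f e - slope_env m a b f c"
proof -
  let ?R = "right_env m b f" and ?L = "left_env m a f"
  from not_slope_bounded_atD[OF assms(3)]
  obtain d g where "d > 0" and g: "g = ?R \<or> g = ?L"
    and affine: "\<forall>y\<in>{a..b} \<inter> ball x d. g y - m * y = g x - m * x"
  proof (elim disjE bexE)
    fix \<tau> assume "\<tau> \<in> {a..<x}" "m * (x - \<tau>) < f x - f \<tau>"
    with assms that[of _ ?L] show thesis
      using left_env_locally_affine[of x \<tau>] by auto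
  next
    fix \<tau> assume "\<tau> \<in> {x<..b}" "m * (\<tau> - x) < f \<tau> - f x"
    with assms that[of _ ?R] show thesis
      using right_env_locally_affine[OF mono nonneg, of x \<tau>] by auto
  qed
  have "m * (e - c) \<le> slope_env m a b f e - slope_env m a b f c"
    if "c \<in> {a..b} \<inter> ball x d" "e \<in> {a..b} \<inter> ball x d" "c \<le> e" for c e
  proof -
    have "?R c \<le> ?R e" "?L c \<le> ?L e"
      using that by (auto intro: mono_onD[OF right_env_mono[OF mono nonneg]] mono_onD[OF left_env_mono])
    moreover have "g e - g c = m * (e - c)"
      using affine[rule_format, of e] affine[rule_format, of c] that by (simp add: right_diff_distrib)
    ultimately show ?thesis
      using g by (auto simp: slope_env_def)
  qed
  with \<open>d > 0\<close> show ?thesis by blast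
qed

end

lemma sum_measure_Int_tagged_division:
  fixes T :: "real set"
  assumes "T \<in> sets lebesgue" and P: "P tagged_division_of {p..q}"
  shows "(\<Sum>(x, K)\<in>P. measure lebesgue (T \<inter> K)) = measure lebesgue (T \<inter> {p..q})"
proof -
  have lmeas: "T \<inter> {c..e} \<in> lmeasurable" for c e
    using assms(1) by (subst Int_commute) (intro fmeasurable_Int_fmeasurable; simp)
  have "(\<Sum>(x, K)\<in>P. measure lebesgue (T \<inter> K)) = (\<Sum>(x, K)\<in>P. integral K (indicat_real T))"
    using tagged_division_ofD(4)[OF P]
    by (intro sum.cong) (force simp: Equivalence_Lebesgue_Henstock_Integration.integral_indicator lmeas)+
  also have "\<dots> = integral {p..q} (indicat_real T)"
    using integral_combine_tagged_division_topdown[of "indicat_real T" p q P] P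
    by (simp add: integrable_on_indicator lmeas)
  also have "\<dots> = measure lebesgue (T \<inter> {p..q})"
    by (simp add: Equivalence_Lebesgue_Henstock_Integration.integral_indicator lmeas)
  finally show ?thesis .
qed

lemma interval_length_le_measure_add_increment:
  fixes w :: "real \<Rightarrow> real" and T :: "real set"
  assumes "p \<le> q" and "open T" and mono: "mono_on {p..q} w"
    and expanding: "\<And>x. x \<in> {p..q} - T \<Longrightarrow> \<exists>d>0. \<forall>c\<in>{p..q} \<inter> ball x d. \<forall>e\<in>{p..q} \<inter> ball x d.
                      c \<le> e \<longrightarrow> e - c \<le> w e - w c"
  shows "q - p \<le> measure lebesgue (T \<inter> {p..q}) + (w q - w p)"
proof -
  have "\<forall>x. \<exists>d>0. x \<in> {p..q} \<longrightarrow> ball x d \<subseteq> T \<or>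
          (\<forall>c\<in>{p..q} \<inter> ball x d. \<forall>e\<in>{p..q} \<inter> ball x d. c \<le> e \<longrightarrow> e - c \<le> w e - w c)"
    using expanding \<open>open T\<close> by (metis Diff_iff open_contains_ball zero_less_one)
  then obtain d where d_pos: "\<And>x. d x > 0" and d: "\<And>x. x \<in> {p..q} \<Longrightarrow> ball x (d x) \<subseteq> T \<or>
          (\<forall>c\<in>{p..q} \<inter> ball x (d x). \<forall>e\<in>{p..q} \<inter> ball x (d x). c \<le> e \<longrightarrow> e - c \<le> w e - w c)"
    by metis
  have "gauge (\<lambda>x. ball x (d x))"
    using d_pos by (simp add: gauge_def)
  then obtain P where P: "P tagged_division_of {p..q}" and fine: "(\<lambda>x. ball x (d x)) fine P"
    by (rule fine_division_exists_real)
  have tag: "Sup K - Inf K \<le> measure lebesgue (T \<inter> K) + (w (Sup K) - w (Inf K))"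
    if xK: "(x, K) \<in> P" for x K
  proof -
    obtain c e where K: "K = {c..e}"
      using tagged_division_ofD(4)[OF P xK] by auto
    have "x \<in> K" "K \<subseteq> {p..q}" "K \<subseteq> ball x (d x)"
      using tagged_division_ofD(2,3)[OF P xK] fine xK by (auto simp: fine_def)
    then have "c \<le> e" and ce: "c \<in> {p..q} \<inter> ball x (d x)" "e \<in> {p..q} \<inter> ball x (d x)"
      by (auto simp: K subset_iff)
    have "w c \<le> w e"
      using ce \<open>c \<le> e\<close> by (intro mono_onD[OF mono]) auto
    moreover have "K \<subseteq> T \<or> e - c \<le> w e - w c"
      using d[of x] ce \<open>c \<le> e\<close> \<open>x \<in> K\<close> \<open>K \<subseteq> {p..q}\<close> \<open>K \<subseteq> ball x (d x)\<close> by blast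
    then have "measure lebesgue (T \<inter> K) = e - c \<or> e - c \<le> w e - w c"
      using \<open>c \<le> e\<close> by (auto simp: K Int_absorb1)
    moreover have K_simps: "Sup K = e" "Inf K = c"
      using \<open>c \<le> e\<close> by (auto simp: K)
    moreover note measure_nonneg[of lebesgue "T \<inter> K"]
    ultimately show ?thesis
      unfolding K_simps by linarith
  qed
  have "q - p = (\<Sum>(x, K)\<in>P. Sup K - Inf K)"
    using additive_tagged_division_1[OF \<open>p \<le> q\<close> P, of "\<lambda>x. x"] by simp
  also have "\<dots> \<le> (\<Sum>(x, K)\<in>P. measure lebesgue (T \<inter> K) + (w (Sup K) - w (Inf K)))"
    using tag by (intro sum_mono) auto
  also have "\<dots> = (\<Sum>(x, K)\<in>P. measure lebesgue (T \<inter> K)) + (\<Sum>(x, K)\<in>P. w (Sup K) - w (Inf K))"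
    by (simp add: sum.distrib case_prod_unfold)
  also have "(\<Sum>(x, K)\<in>P. measure lebesgue (T \<inter> K)) = measure lebesgue (T \<inter> {p..q})"
    using \<open>open T\<close> P by (intro sum_measure_Int_tagged_division) (simp add: borel_open)
  also have "(\<Sum>(x, K)\<in>P. w (Sup K) - w (Inf K)) = w q - w p"
    using additive_tagged_division_1[OF \<open>p \<le> q\<close> P] by simp
  finally show ?thesis .
qed

lemma rising_sun_estimate:
  fixes f :: "real \<Rightarrow> real" and T :: "real set"
  assumes "a \<le> p" "p \<le> q" "q \<le> b" and mono: "mono_on {a..b} f" and "0 < m" and "open T"
    and bad: "\<And>x. x \<in> {p..q} - T \<Longrightarrow> isCont f x \<and> \<not> slope_bounded_at f a b m x"
  shows "q - p \<le> measure lebesgue (T \<inter> {p..q}) + 2 * (f b - f a) / m"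
proof -
  define w where "w x = slope_env m a b f x / m" for x
  have incr: "w e - w c = (slope_env m a b f e - slope_env m a b f c) / m" for c e
    by (simp add: w_def diff_divide_distrib)
  have "mono_on {p..q} w"
    using mono_onD[OF slope_env_mono[OF mono]] assms(1-3) \<open>0 < m\<close>
    by (intro mono_onI) (simp add: w_def divide_right_mono)
  moreover have "\<exists>d>0. \<forall>c\<in>{p..q} \<inter> ball x d. \<forall>e\<in>{p..q} \<inter> ball x d. c \<le> e \<longrightarrow> e - c \<le> w e - w c"
    if x: "x \<in> {p..q} - T" for x
  proof -
    obtain d where "d > 0" and d: "\<forall>c\<in>{a..b} \<inter> ball x d. \<forall>e\<in>{a..b} \<inter> ball x d.
        c \<le> e \<longrightarrow> m * (e - c) \<le> slope_env m a b f e - slope_env m a b f c"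
      using slope_env_locally_expanding[OF mono, of m x] bad[OF x] x assms(1-3) \<open>0 < m\<close>
      by auto
    have "e - c \<le> w e - w c"
      if "c \<in> {p..q} \<inter> ball x d" "e \<in> {p..q} \<inter> ball x d" "c \<le> e" for c e
      using d that assms(1-3) \<open>0 < m\<close> by (auto simp: incr pos_le_divide_eq mult.commute)
    with \<open>d > 0\<close> show ?thesis by blast
  qed
  ultimately have "q - p \<le> measure lebesgue (T \<inter> {p..q}) + (w q - w p)"
    using \<open>p \<le> q\<close> \<open>open T\<close> by (intro interval_length_le_measure_add_increment) auto
  also have "w q - w p \<le> 2 * (f b - f a) / m"
    using slope_env_increment_le[OF mono _ assms(1-3), of m] \<open>0 < m\<close>
    by (simp add: incr divide_right_mono)
  finally show ?thesis by simp
qed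

lemma exists_slope_bounded_point_outside_open:
  fixes f :: "real \<Rightarrow> real" and T :: "real set"
  assumes "a \<le> p" "p \<le> q" "q \<le> b" and mono: "mono_on {a..b} f" and "0 < c" and "open T"
    and cont: "\<And>x. x \<in> {p..q} - T \<Longrightarrow> isCont f x"
    and small: "measure lebesgue (T \<inter> {p..q}) + 2 / c < q - p"
  shows "\<exists>x\<in>{p..q} - T. slope_bounded_at f a b (c * (f b - f a)) x"
proof (cases "f a = f b")
  case True
  have const: "f x - f y = 0" if "x \<in> {a..b}" "y \<in> {a..b}" for x y
    using mono_onD[OF mono, of a x] mono_onD[OF mono, of x b] mono_onD[OF mono, of a y]
      mono_onD[OF mono, of y b] that True by auto
  have "\<not> {p..q} \<subseteq> T"
  proof
    assume "{p..q} \<subseteq> T"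
    then have "measure lebesgue (T \<inter> {p..q}) = q - p"
      using \<open>p \<le> q\<close> by (simp add: Int_absorb1)
    with small \<open>0 < c\<close> show False by simp
  qed
  then obtain x where x: "x \<in> {p..q} - T" by blast
  then have "slope_bounded_at f a b (c * (f b - f a)) x"
    using True assms(1-3) by (auto simp: slope_bounded_at_def const)
  with x show ?thesis by blast
next
  case False
  then have "0 < c * (f b - f a)"
    using mono_onD[OF mono, of a b] assms(1-3) \<open>0 < c\<close> by auto
  show ?thesis
  proof (rule ccontr)
    assume "\<not> ?thesis"
    then have "q - p \<le> measure lebesgue (T \<inter> {p..q}) + 2 * (f b - f a) / (c * (f b - f a))"
      using cont \<open>0 < c * (f b - f a)\<close> \<open>open T\<close> assms(1-3)
      by (intro rising_sun_estimate[OF _ _ _ mono]) auto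
    moreover have "2 * (f b - f a) / (c * (f b - f a)) = 2 / c"
      using False nonzero_mult_divide_mult_cancel_right[of "f b - f a" 2 c] by simp
    ultimately show False
      using small by simp
  qed
qed

lemma open_superset_measure_lt:
  fixes S :: "'a::euclidean_space set"
  assumes "S \<in> lmeasurable" and "measure lebesgue S < \<mu>"
  obtains T where "open T" "S \<subseteq> T" "T \<in> lmeasurable" "measure lebesgue T < \<mu>"
proof -
  obtain T where "open T" "S \<subseteq> T" and excess: "T - S \<in> lmeasurable"
      "emeasure lebesgue (T - S) < ennreal (\<mu> - measure lebesgue S)"
    using sets_lebesgue_outer_open[of S "\<mu> - measure lebesgue S"] assms by auto
  have "T = S \<union> (T - S)"
    using \<open>S \<subseteq> T\<close> by auto
  then have "T \<in> lmeasurable"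
    using assms(1) excess(1) by (metis fmeasurable.Un)
  moreover have "measure lebesgue T \<le> measure lebesgue S + measure lebesgue (T - S)"
    using \<open>T = S \<union> (T - S)\<close> assms(1) excess(1) measure_Un_le[of S lebesgue "T - S"] by auto
  moreover have "measure lebesgue (T - S) < \<mu> - measure lebesgue S"
    using excess assms(2) by (simp add: emeasure_eq_measure2 ennreal_less_iff)
  ultimately show ?thesis
    using that \<open>open T\<close> \<open>S \<subseteq> T\<close> by simp
qed

lemma exists_slope_bounded_point_outside:
  fixes f :: "real \<Rightarrow> real" and E :: "real set"
  assumes "a \<le> p" "p \<le> q" "q \<le> b" and mono: "mono_on {a..b} f" and "0 < c"
    and "E \<in> lmeasurable" and small: "measure lebesgue E + 2 / c < q - p"
  shows "\<exists>x\<in>{p..q} - E. slope_bounded_at f a b (c * (f b - f a)) x"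
proof -
  define J where "J = {x\<in>{a<..<b}. \<not> isCont f x} \<union> {a, b}"
  have "countable {x\<in>{a<..<b}. \<not> isCont f x}"
    using mono_on_subset[OF mono, of "{a<..<b}"] by (intro mono_on_ctble_discont_open) force+
  then have "countable J"
    by (simp add: J_def)
  then have J_null: "J \<in> null_sets lebesgue"
    by (intro null_sets_completionI countable_imp_null_set_lborel)
  have "E \<union> J \<in> lmeasurable"
    using \<open>E \<in> lmeasurable\<close> J_null by (auto intro: fmeasurable.Un fmeasurableI_null_sets)
  moreover have "measure lebesgue (E \<union> J) < q - p - 2 / c"
    using \<open>E \<in> lmeasurable\<close> J_null small by (simp add: measure_Un_null_set)
  ultimately obtain T where "open T" "E \<union> J \<subseteq> T" "T \<in> lmeasurable"
      "measure lebesgue T < q - p - 2 / c"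
    by (rule open_superset_measure_lt)
  moreover have "measure lebesgue (T \<inter> {p..q}) \<le> measure lebesgue T"
    using \<open>T \<in> lmeasurable\<close> \<open>open T\<close> by (intro measure_mono_fmeasurable) (auto simp: borel_open)
  ultimately have "measure lebesgue (T \<inter> {p..q}) + 2 / c < q - p"
    by linarith
  moreover have "isCont f x" if "x \<in> {p..q} - T" for x
  proof -
    have "x \<notin> J"
      using that \<open>E \<union> J \<subseteq> T\<close> by auto
    then show ?thesis
      using that assms(1-3) by (auto simp: J_def)
  qed
  ultimately have "\<exists>x\<in>{p..q} - T. slope_bounded_at f a b (c * (f b - f a)) x"
    using assms(1-3) mono \<open>0 < c\<close> \<open>open T\<close> by (intro exists_slope_bounded_point_outside_open) auto
  then show ?thesis
    using \<open>E \<union> J \<subseteq> T\<close> by blast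
qed

theorem lemma3p5:
  fixes f :: "real \<Rightarrow> real" and r s \<theta> :: real and E :: "real set"
  assumes "0 < r" and "r < s"
    and "0 \<le> \<theta>" and "\<theta> < 1/8"
    and "mono_on {r..s} f"
    and "\<forall>x\<in>{r..<s}. continuous (at x within {x..s}) f"
    and "E \<in> sets lebesgue" and "E \<subseteq> {r..s}"
    and "measure lebesgue E < \<theta> * (s - r)"
  shows "\<exists>rt st. r < rt \<and> rt < st \<and> st < s \<and> rt \<notin> E \<and> st \<notin> E \<and>
    (\<forall>a\<in>{rt, st}.
       (\<forall>\<tau>\<in>{r..<a}. (f a - f \<tau>) / (a - \<tau>) \<le> 800 / (1 - 8*\<theta>) * ((f s - f r) / (s - r))) \<and>
       (\<forall>\<tau>\<in>{a<..s}. (f \<tau> - f a) / (\<tau> - a) \<le> 800 / (1 - 8*\<theta>) * ((f s - f r) / (s - r)))) \<and>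
    st - rt \<le> s - r \<and> s - r \<le> 8 * (st - rt)"
proof -
  define L where "L = s - r"
  define c where "c = 800 / (1 - 8*\<theta>) / L"
  have "0 < L" "0 < c" "s = r + L"
    using assms(2,4) by (auto simp: L_def c_def)
  have "E \<in> lmeasurable"
    using assms(7,8) by (intro bounded_set_imp_lmeasurable) (auto intro: bounded_subset[of "{r..s}"])
  have "2 / c \<le> L / 400" "\<theta> * L \<le> L / 8"
    using assms(3,4) \<open>0 < L\<close> by (simp_all add: c_def field_simps)
  then have "measure lebesgue E + 2 / c < L / 4"
    using assms(9)[folded L_def] \<open>0 < L\<close> by linarith
  then have good: "\<exists>x\<in>{p..q} - E. slope_bounded_at f r s (c * (f s - f r)) x"
    if "r \<le> p" "q \<le> s" "q - p = L / 4" for p q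
    using that \<open>0 < L\<close>
    by (intro exists_slope_bounded_point_outside[OF _ _ _ assms(5) \<open>0 < c\<close> \<open>E \<in> lmeasurable\<close>]) simp_all
  obtain rt where rt: "rt \<in> {r + L/8 .. r + 3*L/8} - E" "slope_bounded_at f r s (c * (f s - f r)) rt"
    using good[of "r + L/8" "r + 3*L/8"] \<open>s = r + L\<close> \<open>0 < L\<close> by auto
  obtain st where st: "st \<in> {s - 3*L/8 .. s - L/8} - E" "slope_bounded_at f r s (c * (f s - f r)) st"
    using good[of "s - 3*L/8" "s - L/8"] \<open>s = r + L\<close> \<open>0 < L\<close> by auto
  have "c * (f s - f r) = 800 / (1 - 8*\<theta>) * ((f s - f r) / (s - r))"
    by (simp add: c_def L_def)
  with rt st \<open>s = r + L\<close> \<open>0 < L\<close> show ?thesis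
    unfolding slope_bounded_at_def by (intro exI[of _ rt] exI[of _ st]) auto
qed

end
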